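(* Let $T=(K_n,K_p,R_s,R_d,C,\mathsf{n})$ be an argumentation theory, let $G(T)$ be its full grounding, and let $G_{DL}(T)$ be the grounding of $T$ obtained via the Datalog program $P_T$ (Transformation 1), both as defined in the context. Then $$\mathrm{Args}(G(T))=\mathrm{Args}(G_{DL}(T))\quad\text{and}\quad \mathrm{Att}(G(T))=\mathrm{Att}(G_{DL}(T)),$$ i.e. the two ground theories induce the same abstract argumentation framework.
   Context: Work over a function-free first-order signature (predicates and constants); atoms are $p(t_1,\dots,t_k)$ with each $t_i$ a constant or variable. An argumentation theory is $T=(K_n,K_p,R_s,R_d,C,\mathsf{n})$ where: $K_n$ (axioms) and $K_p$ (ordinary premises) are finite sets of ground atoms; $R_s$ (strict rules) is a finite set of rules $b_1(\vec X_1),\dots,b_m(\vec X_m)\to h(\vec Y)$ and $R_d$ (defeasible rules) a finite set of rules $b_1(\vec X_1),\dots,b_m(\vec X_m)\Rightarrow h(\vec Y)$, where every variable of the head occurs in the body; each $r\in R_d$ carries a name atom $\mathsf{n}(r)=\nu_r(\vec Z)$ whose variables occur in the body of $r$; $C$ is a finite set of contrariness rules $c: s(\vec X)\rightsquigarrow S(\vec X)$, where $s(\vec X)$ is an atom and $S(\vec X)$ a finite set of atoms whose variables occur in $\vec X$. The Herbrand universe $HU(T)$ is the set of constants occurring in $T$; a ground substitution maps variables to $HU(T)$, and for a rule or contrariness rule $x$ and ground substitution $\sigma$, $x\sigma$ is its ground instance (with $\mathsf{n}(r\sigma)=\mathsf{n}(r)\sigma$). The full grounding $G(T)$ has the same $K_n,K_p$,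 and as rules and contrariness rules all ground instances $x\sigma$ of those of $T$. For a ground theory $G$ with premises $K_n\cup K_p$, rules $R$ and contrariness rules $C'$: arguments are defined inductively: each $k\in K_n\cup K_p$ is an argument with conclusion $\mathrm{conc}=k$, premises $\mathrm{Prem}=\{k\}$, no rules; if $A_1,\dots,A_m$ are arguments and $r\in R$ is a ground rule with body $\mathrm{conc}(A_1),\dots,\mathrm{conc}(A_m)$ and head $h$, then $A=\langle A_1,\dots,A_m\to h\rangle$ is an argument with $\mathrm{conc}(A)=h$, top rule $\mathrm{top}(A)=r$, $\mathrm{Prem}(A)=\bigcup_i\mathrm{Prem}(A_i)$, $\mathrm{Rules}(A)=\{r\}\cup\bigcup_i\mathrm{Rules}(A_i)$, and subarguments $\mathrm{Sub}(A)=\{A\}\cup\bigcup_i\mathrm{Sub}(A_i)$. The weak points of $A$ are $\mathrm{wp}(A)=(\mathrm{Prem}(A)\cap K_p)\cup\bigcup_{r\in\mathrm{Rules}(A)\cap R_d}\{\mathrm{head}(r),\mathsf{n}(r)\}$. Argument $A$ attacks $A'$ iff there is a ground contrariness rule $s\rightsquigarrow S$ in $C'$ with $s\in\mathrm{wp}(A')$ and $\mathrm{conc}(A)\in S$. $\mathrm{Args}(G)$ and $\mathrm{Att}(G)$ denote the set of arguments and the attack relation. Transformation 1: the Datalog program $P_T$ contains the fact $k.$ for every $k\in K_n\cup K_p$, and for every rule $r\in R_s\cup R_d$ with body $b_1(\vec X_1),\dots,b_m(\vec X_m)$, head $h(\vec Y)$ and variable list $\vec X$ (all variables of $r$), with a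 fresh predicate $\mathrm{aux}_r$: the rules $\mathrm{aux}_r(\vec X)\leftarrow b_1(\vec X_1),\dots,b_m(\vec X_m)$ and $h(\vec Y)\leftarrow \mathrm{aux}_r(\vec X)$, and, if $r\in R_d$ with $\mathsf{n}(r)=\nu_r(\vec Z)$, additionally $\nu_r(\vec Z)\leftarrow\mathrm{aux}_r(\vec X)$. Let $M$ be the least Herbrand model of $P_T$. The grounding via Datalog $G_{DL}(T)$ has premises $K_n,K_p$, rules $\{r\sigma : r\in R_s\cup R_d,\ \mathrm{aux}_r(\vec X)\sigma\in M\}$ (strict/defeasible as $r$), and contrariness rules $\{c\sigma: c=(s(\vec X)\rightsquigarrow S(\vec X))\in C,\ s(\vec X)\sigma\in M\}$. *)

theory Defs
  imports Main
begin

datatype ('c, 'v) trm = Cst 'c | Vr 'v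

type_synonym ('p, 'c, 'v) atm = "'p \<times> ('c, 'v) trm list"
type_synonym ('p, 'c) gatm = "'p \<times> 'c list"

datatype ('p, 'c, 'v) rule = Rule (rbody: "('p, 'c, 'v) atm list") (rhead: "('p, 'c, 'v) atm")

type_synonym ('p, 'c, 'v) crule = "('p, 'c, 'v) atm \<times> ('p, 'c, 'v) atm set"

record ('p, 'c, 'v) argtheory =
  Kn :: "('p, 'c) gatm set"
  Kp :: "('p, 'c) gatm set"
  Rs :: "('p, 'c, 'v) rule set"
  Rd :: "('p, 'c, 'v) rule set"
  Cn :: "('p, 'c, 'v) crule set"
  nm :: "('p, 'c, 'v) rule \<Rightarrow> ('p, 'c, 'v) atm"

fun trm_vars :: "('c, 'v) trm \<Rightarrow> 'v set" where
  "trm_vars (Cst c) = {}" | "trm_vars (Vr v) = {v}"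
fun trm_consts :: "('c, 'v) trm \<Rightarrow> 'c set" where
  "trm_consts (Cst c) = {c}" | "trm_consts (Vr v) = {}"

definition atm_vars :: "('p, 'c, 'v) atm \<Rightarrow> 'v set" where
  "atm_vars a = (\<Union>t\<in>set (snd a). trm_vars t)"
definition atm_consts :: "('p, 'c, 'v) atm \<Rightarrow> 'c set" where
  "atm_consts a = (\<Union>t\<in>set (snd a). trm_consts t)"

definition body_vars :: "('p, 'c, 'v) rule \<Rightarrow> 'v set" where
  "body_vars r = (\<Union>b\<in>set (rbody r). atm_vars b)"

text \<open>All variables of a rule (body and head; by well-formedness the variables of the
  name atom of a defeasible rule are among them, so these are exactly the body variables).\<close>
definition rule_vars :: "('p, 'c, 'v) rule \<Rightarrow> 'v set" where
  "rule_vars r = body_vars r \<union> atm_vars (rhead r)"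

definition crule_vars :: "('p, 'c, 'v) crule \<Rightarrow> 'v set" where
  "crule_vars c = atm_vars (fst c) \<union> (\<Union>a\<in>snd c. atm_vars a)"

definition wf_theory :: "('p, 'c, 'v) argtheory \<Rightarrow> bool" where
  "wf_theory T \<longleftrightarrow>
     finite (Kn T) \<and> finite (Kp T) \<and> finite (Rs T) \<and> finite (Rd T) \<and> finite (Cn T) \<and>
     (\<forall>r \<in> Rs T \<union> Rd T. atm_vars (rhead r) \<subseteq> body_vars r) \<and>
     (\<forall>r \<in> Rd T. atm_vars (nm T r) \<subseteq> body_vars r) \<and>
     (\<forall>c \<in> Cn T. finite (snd c) \<and> (\<forall>a \<in> snd c. atm_vars a \<subseteq> atm_vars (fst c)))"

definition HU :: "('p, 'c, 'v) argtheory \<Rightarrow> 'c set" where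
  "HU T = (\<Union>k \<in> Kn T \<union> Kp T. set (snd k))
        \<union> (\<Union>r \<in> Rs T \<union> Rd T. (\<Union>b\<in>set (rbody r). atm_consts b) \<union> atm_consts (rhead r))
        \<union> (\<Union>r \<in> Rd T. atm_consts (nm T r))
        \<union> (\<Union>c \<in> Cn T. atm_consts (fst c) \<union> (\<Union>a\<in>snd c. atm_consts a))"

fun trm_subst :: "('v \<Rightarrow> 'c) \<Rightarrow> ('c, 'v) trm \<Rightarrow> 'c" where
  "trm_subst \<sigma> (Cst c) = c" | "trm_subst \<sigma> (Vr v) = \<sigma> v"

definition atm_subst :: "('v \<Rightarrow> 'c) \<Rightarrow> ('p, 'c, 'v) atm \<Rightarrow> ('p, 'c) gatm" where
  "atm_subst \<sigma> a = (fst a, map (trm_subst \<sigma>) (snd a))"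

definition ground_subst_on :: "'c set \<Rightarrow> 'v set \<Rightarrow> ('v \<Rightarrow> 'c) \<Rightarrow> bool" where
  "ground_subst_on U V \<sigma> \<longleftrightarrow> (\<forall>v \<in> V. \<sigma> v \<in> U)"

text \<open>Ground rules, tagged strict/defeasible; a defeasible ground rule carries its name atom.\<close>
datatype ('p, 'c) grule =
    GStr "('p, 'c) gatm list" "('p, 'c) gatm"
  | GDef "('p, 'c) gatm list" "('p, 'c) gatm" "('p, 'c) gatm"

fun gbody :: "('p, 'c) grule \<Rightarrow> ('p, 'c) gatm list" where
  "gbody (GStr b h) = b" | "gbody (GDef b h n) = b"
fun ghead :: "('p, 'c) grule \<Rightarrow> ('p, 'c) gatm" where
  "ghead (GStr b h) = h" | "ghead (GDef b h n) = h"
fun is_def :: "('p, 'c) grule \<Rightarrow> bool" where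
  "is_def (GStr b h) = False" | "is_def (GDef b h n) = True"
fun gname :: "('p, 'c) grule \<Rightarrow> ('p, 'c) gatm" where
  "gname (GStr b h) = undefined" | "gname (GDef b h n) = n"

record ('p, 'c) gtheory =
  GKn :: "('p, 'c) gatm set"
  GKp :: "('p, 'c) gatm set"
  GR :: "('p, 'c) grule set"
  GC :: "(('p, 'c) gatm \<times> ('p, 'c) gatm set) set"

datatype ('p, 'c) arg = APrem "('p, 'c) gatm" | ANode "('p, 'c) grule" "('p, 'c) arg list"

fun conc :: "('p, 'c) arg \<Rightarrow> ('p, 'c) gatm" where
  "conc (APrem k) = k" | "conc (ANode r As) = ghead r"

fun Prem :: "('p, 'c) arg \<Rightarrow> ('p, 'c) gatm set" where
  "Prem (APrem k) = {k}" | "Prem (ANode r As) = (\<Union>A\<in>set As. Prem A)"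

fun Rules :: "('p, 'c) arg \<Rightarrow> ('p, 'c) grule set" where
  "Rules (APrem k) = {}" | "Rules (ANode r As) = insert r (\<Union>A\<in>set As. Rules A)"

inductive is_arg :: "('p, 'c) gtheory \<Rightarrow> ('p, 'c) arg \<Rightarrow> bool" for G where
  prem: "k \<in> GKn G \<union> GKp G \<Longrightarrow> is_arg G (APrem k)"
| node: "r \<in> GR G \<Longrightarrow> (\<forall>A\<in>set As. is_arg G A) \<Longrightarrow> map conc As = gbody r
         \<Longrightarrow> is_arg G (ANode r As)"

definition Args :: "('p, 'c) gtheory \<Rightarrow> ('p, 'c) arg set" where
  "Args G = {A. is_arg G A}"

definition wp :: "('p, 'c) gtheory \<Rightarrow> ('p, 'c) arg \<Rightarrow> ('p, 'c) gatm set" where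
  "wp G A = (Prem A \<inter> GKp G) \<union> (\<Union>r \<in> {r \<in> Rules A. is_def r}. {ghead r, gname r})"

definition attacks :: "('p, 'c) gtheory \<Rightarrow> ('p, 'c) arg \<Rightarrow> ('p, 'c) arg \<Rightarrow> bool" where
  "attacks G A A' \<longleftrightarrow> (\<exists>(s, S) \<in> GC G. s \<in> wp G A' \<and> conc A \<in> S)"

definition Att :: "('p, 'c) gtheory \<Rightarrow> (('p, 'c) arg \<times> ('p, 'c) arg) set" where
  "Att G = {(A, A'). A \<in> Args G \<and> A' \<in> Args G \<and> attacks G A A'}"

definition inst_str :: "('v \<Rightarrow> 'c) \<Rightarrow> ('p, 'c, 'v) rule \<Rightarrow> ('p, 'c) grule" where
  "inst_str \<sigma> r = GStr (map (atm_subst \<sigma>) (rbody r)) (atm_subst \<sigma> (rhead r))"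

definition inst_def :: "('p, 'c, 'v) argtheory \<Rightarrow> ('v \<Rightarrow> 'c) \<Rightarrow> ('p, 'c, 'v) rule \<Rightarrow> ('p, 'c) grule" where
  "inst_def T \<sigma> r = GDef (map (atm_subst \<sigma>) (rbody r)) (atm_subst \<sigma> (rhead r)) (atm_subst \<sigma> (nm T r))"

definition inst_c :: "('v \<Rightarrow> 'c) \<Rightarrow> ('p, 'c, 'v) crule \<Rightarrow> ('p, 'c) gatm \<times> ('p, 'c) gatm set" where
  "inst_c \<sigma> c = (atm_subst \<sigma> (fst c), atm_subst \<sigma> ` snd c)"

definition full_ground :: "('p, 'c, 'v) argtheory \<Rightarrow> ('p, 'c) gtheory" where
  "full_ground T = \<lparr> GKn = Kn T, GKp = Kp T,
     GR = {inst_str \<sigma> r | r \<sigma>. r \<in> Rs T \<and> ground_subst_on (HU T) (rule_vars r) \<sigma>}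
        \<union> {inst_def T \<sigma> r | r \<sigma>. r \<in> Rd T \<and> ground_subst_on (HU T) (rule_vars r \<union> atm_vars (nm T r)) \<sigma>},
     GC = {inst_c \<sigma> c | c \<sigma>. c \<in> Cn T \<and> ground_subst_on (HU T) (crule_vars c) \<sigma>} \<rparr>"

type_synonym ('q, 'c, 'v) clause = "('q, 'c, 'v) atm \<times> ('q, 'c, 'v) atm list"

definition clause_vars :: "('q, 'c, 'v) clause \<Rightarrow> 'v set" where
  "clause_vars cl = atm_vars (fst cl) \<union> (\<Union>b\<in>set (snd cl). atm_vars b)"

definition prog_HU :: "('q, 'c, 'v) clause set \<Rightarrow> 'c set" where
  "prog_HU P = (\<Union>cl\<in>P. atm_consts (fst cl) \<union> (\<Union>b\<in>set (snd cl). atm_consts b))"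

inductive_set lhm :: "('q, 'c, 'v) clause set \<Rightarrow> ('q, 'c) gatm set" for P where
  "cl \<in> P \<Longrightarrow> ground_subst_on (prog_HU P) (clause_vars cl) \<sigma> \<Longrightarrow>
   (\<forall>b\<in>set (snd cl). atm_subst \<sigma> b \<in> lhm P) \<Longrightarrow> atm_subst \<sigma> (fst cl) \<in> lhm P"

text \<open>Predicates of P_T: the original ones, plus a fresh predicate aux_r for every rule
  (Inl r for strict rules, Inr r for defeasible rules).\<close>
datatype ('p, 'r) dlpred = OP 'p | AuxP 'r

definition lift :: "('p, 'c, 'v) atm \<Rightarrow> (('p, 'r) dlpred, 'c, 'v) atm" where
  "lift a = (OP (fst a), snd a)"

definition vlist :: "('p, 'c, 'v) rule \<Rightarrow> 'v list" where
  "vlist r = (SOME xs. distinct xs \<and> set xs = rule_vars r)"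

type_synonym ('p, 'c, 'v) ridx = "('p, 'c, 'v) rule + ('p, 'c, 'v) rule"

definition aux_atm :: "('p, 'c, 'v) ridx \<Rightarrow> ('p, 'c, 'v) rule \<Rightarrow>
    ((('p, ('p, 'c, 'v) ridx) dlpred), 'c, 'v) atm" where
  "aux_atm i r = (AuxP i, map Vr (vlist r))"

definition P_T :: "('p, 'c, 'v) argtheory \<Rightarrow> (('p, ('p, 'c, 'v) ridx) dlpred, 'c, 'v) clause set" where
  "P_T T =
     {((OP (fst k), map Cst (snd k)), []) | k. k \<in> Kn T \<union> Kp T}
   \<union> {(aux_atm (Inl r) r, map lift (rbody r)) | r. r \<in> Rs T}
   \<union> {(lift (rhead r), [aux_atm (Inl r) r]) | r. r \<in> Rs T}
   \<union> {(aux_atm (Inr r) r, map lift (rbody r)) | r. r \<in> Rd T}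
   \<union> {(lift (rhead r), [aux_atm (Inr r) r]) | r. r \<in> Rd T}
   \<union> {(lift (nm T r), [aux_atm (Inr r) r]) | r. r \<in> Rd T}"

definition dl_ground :: "('p, 'c, 'v) argtheory \<Rightarrow> ('p, 'c) gtheory" where
  "dl_ground T = (let M = lhm (P_T T) in \<lparr> GKn = Kn T, GKp = Kp T,
     GR = {inst_str \<sigma> r | r \<sigma>. r \<in> Rs T \<and> ground_subst_on (HU T) (rule_vars r) \<sigma>
              \<and> (AuxP (Inl r), map \<sigma> (vlist r)) \<in> M}
        \<union> {inst_def T \<sigma> r | r \<sigma>. r \<in> Rd T \<and> ground_subst_on (HU T) (rule_vars r \<union> atm_vars (nm T r)) \<sigma>
              \<and> (AuxP (Inr r), map \<sigma> (vlist r)) \<in> M},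
     GC = {inst_c \<sigma> c | c \<sigma>. c \<in> Cn T \<and> ground_subst_on (HU T) (crule_vars c) \<sigma>
              \<and> (OP (fst (fst c)), map (trm_subst \<sigma>) (snd (fst c))) \<in> M} \<rparr>)"

end

theory Submission
  imports Defs
begin

text \<open>\<open>G_DL(T)\<close> is obtained from \<open>G(T)\<close> by discarding ground rules and contrariness rules,
  so every argument and attack of \<open>G_DL(T)\<close> is one of \<open>G(T)\<close>. Conversely, by induction on
  an argument of \<open>G(T)\<close>, the conclusion and all weak points of every argument lie in the least
  model \<open>M\<close> of \<open>P_T\<close>: the body atoms of its top rule are in \<open>M\<close>, so the clause for \<open>aux_r\<close> fires,
  which puts the rule into \<open>G_DL(T)\<close> and its head and name into \<open>M\<close>. An attack on such an
  argument uses a contrariness rule whose left side is a weak point, hence in \<open>M\<close>, so that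
  contrariness rule survives in \<open>G_DL(T)\<close> as well.\<close>

abbreviation lift_gatm :: "('p, 'c) gatm \<Rightarrow> (('p, 'r) dlpred, 'c) gatm" where
  "lift_gatm g \<equiv> (OP (fst g), snd g)"

lemma is_arg_mono:
  assumes "is_arg G A"
    and "GKn G \<union> GKp G \<subseteq> GKn G' \<union> GKp G'" and "GR G \<subseteq> GR G'"
  shows "is_arg G' A"
  using assms(1) by induction (use assms(2,3) in \<open>auto intro: is_arg.intros\<close>)

lemma wp_APrem: "wp G (APrem k) = {k} \<inter> GKp G"
  by (simp add: wp_def)

lemma wp_ANode:
  "wp G (ANode r As) = (\<Union>A\<in>set As. wp G A) \<union> (if is_def r then {ghead r, gname r} else {})"
  by (auto simp: wp_def)

lemma lhm_args_in_prog_HU: "x \<in> lhm P \<Longrightarrow> set (snd x) \<subseteq> prog_HU P"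
proof (induction rule: lhm.induct)
  case (1 cl \<sigma>)
  show ?case
  proof
    fix c assume "c \<in> set (snd (atm_subst \<sigma> (fst cl)))"
    then obtain t where t: "t \<in> set (snd (fst cl))" "c = trm_subst \<sigma> t"
      by (auto simp: atm_subst_def)
    show "c \<in> prog_HU P"
    proof (cases t)
      case (Cst d)
      then have "d \<in> atm_consts (fst cl)" using t(1) unfolding atm_consts_def by force
      then show ?thesis using 1(1) t(2) Cst unfolding prog_HU_def by auto
    next
      case (Vr v)
      then have "v \<in> clause_vars cl" using t(1) unfolding clause_vars_def atm_vars_def by force
      then show ?thesis using 1(2) t(2) Vr by (simp add: ground_subst_on_def)
    qed
  qed
qed

lemma subst_var_in_args: "v \<in> atm_vars b \<Longrightarrow> \<sigma> v \<in> set (snd (atm_subst \<sigma> b))"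
proof -
  assume "v \<in> atm_vars b"
  then obtain t where "t \<in> set (snd b)" "v \<in> trm_vars t" unfolding atm_vars_def by blast
  moreover from \<open>v \<in> trm_vars t\<close> have "t = Vr v" by (cases t) auto
  ultimately show ?thesis by (force simp: atm_subst_def)
qed

text \<open>For a range-restricted clause the Herbrand-universe side condition of \<^const>\<open>lhm\<close> is
  automatic: the variables are bound to arguments of atoms already in the model.\<close>
lemma lhm_range_restricted_clause:
  assumes "cl \<in> P" and "clause_vars cl \<subseteq> (\<Union>b\<in>set (snd cl). atm_vars b)"
    and "\<forall>b\<in>set (snd cl). atm_subst \<sigma> b \<in> lhm P"
  shows "atm_subst \<sigma> (fst cl) \<in> lhm P"
proof (rule lhm.intros[OF assms(1) _ assms(3)])
  show "ground_subst_on (prog_HU P) (clause_vars cl) \<sigma>"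
    unfolding ground_subst_on_def
  proof
    fix v assume "v \<in> clause_vars cl"
    then obtain b where b: "b \<in> set (snd cl)" "v \<in> atm_vars b" using assms(2) by blast
    then have "set (snd (atm_subst \<sigma> b)) \<subseteq> prog_HU P"
      using assms(3) lhm_args_in_prog_HU by blast
    with subst_var_in_args[OF b(2)] show "\<sigma> v \<in> prog_HU P" by blast
  qed
qed

lemma finite_trm_vars: "finite (trm_vars t)"
  by (cases t) simp_all

lemma set_vlist: "set (vlist r) = rule_vars r"
proof -
  have "finite (rule_vars r)"
    by (simp add: rule_vars_def body_vars_def atm_vars_def finite_trm_vars)
  then have "\<exists>xs. distinct xs \<and> set xs = rule_vars r"
    using finite_distinct_list by blast
  then show ?thesis unfolding vlist_def by (rule someI2_ex) blast
qed

lemma atm_vars_aux_atm [simp]: "atm_vars (aux_atm i r) = rule_vars r"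
  by (simp add: atm_vars_def aux_atm_def set_vlist)

lemma atm_subst_aux_atm [simp]: "atm_subst \<sigma> (aux_atm i r) = (AuxP i, map \<sigma> (vlist r))"
  by (simp add: atm_subst_def aux_atm_def)

lemma atm_subst_lift [simp]: "atm_subst \<sigma> (lift a) = lift_gatm (atm_subst \<sigma> a)"
  by (simp add: atm_subst_def lift_def)

lemma atm_vars_lift [simp]: "atm_vars (lift a) = atm_vars a"
  by (simp add: atm_vars_def lift_def)

lemma lhm_aux_atm:
  assumes "(aux_atm i r, map lift (rbody r)) \<in> P"
    and "atm_vars (rhead r) \<subseteq> body_vars r"
    and "\<forall>b\<in>set (rbody r). lift_gatm (atm_subst \<sigma> b) \<in> lhm P"
  shows "(AuxP i, map \<sigma> (vlist r)) \<in> lhm P"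
  using lhm_range_restricted_clause[OF assms(1), of \<sigma>] assms(2,3)
  by (auto simp: clause_vars_def rule_vars_def body_vars_def)

lemma lhm_from_aux_atm:
  assumes "(lift a, [aux_atm i r]) \<in> P"
    and "atm_vars a \<subseteq> rule_vars r"
    and "(AuxP i, map \<sigma> (vlist r)) \<in> lhm P"
  shows "lift_gatm (atm_subst \<sigma> a) \<in> lhm P"
  using lhm_range_restricted_clause[OF assms(1), of \<sigma>] assms(2,3)
  by (auto simp: clause_vars_def)

lemma lhm_premise:
  assumes "k \<in> Kn T \<union> Kp T"
  shows "lift_gatm k \<in> lhm (P_T T)"
proof -
  have "((OP (fst k), map Cst (snd k)), []) \<in> P_T T"
    using assms unfolding P_T_def by blast
  from lhm_range_restricted_clause[OF this, of "\<lambda>_. undefined"] show ?thesis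
    by (simp add: clause_vars_def atm_vars_def atm_subst_def comp_def)
qed

lemma dl_ground_subtheory:
  "GKn (dl_ground T) = GKn (full_ground T)" "GKp (dl_ground T) = GKp (full_ground T)"
  "GR (dl_ground T) \<subseteq> GR (full_ground T)" "GC (dl_ground T) \<subseteq> GC (full_ground T)"
  by (auto simp: full_ground_def dl_ground_def Let_def)

lemma wp_dl_ground: "wp (dl_ground T) = wp (full_ground T)"
  by (simp add: wp_def[abs_def] dl_ground_subtheory)

lemma full_ground_rule_in_dl_ground:
  assumes wf: "wf_theory T" and r: "r \<in> GR (full_ground T)"
    and body: "\<forall>b\<in>set (gbody r). lift_gatm b \<in> lhm (P_T T)"
  shows "r \<in> GR (dl_ground T) \<and> lift_gatm (ghead r) \<in> lhm (P_T T)
     \<and> (is_def r \<longrightarrow> lift_gatm (gname r) \<in> lhm (P_T T))"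
proof -
  have hv: "\<forall>r \<in> Rs T \<union> Rd T. atm_vars (rhead r) \<subseteq> body_vars r"
    and nv: "\<forall>r \<in> Rd T. atm_vars (nm T r) \<subseteq> body_vars r"
    using wf by (auto simp: wf_theory_def)
  from r consider
    (Str) r0 \<sigma> where "r = inst_str \<sigma> r0" "r0 \<in> Rs T" "ground_subst_on (HU T) (rule_vars r0) \<sigma>"
  | (Def) r0 \<sigma> where "r = inst_def T \<sigma> r0" "r0 \<in> Rd T"
      "ground_subst_on (HU T) (rule_vars r0 \<union> atm_vars (nm T r0)) \<sigma>"
    by (auto simp: full_ground_def)
  then show ?thesis
  proof cases
    case Str
    have "(aux_atm (Inl r0) r0, map lift (rbody r0)) \<in> P_T T"
      and head: "(lift (rhead r0), [aux_atm (Inl r0) r0]) \<in> P_T T"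
      using Str unfolding P_T_def by blast+
    then have aux: "(AuxP (Inl r0), map \<sigma> (vlist r0)) \<in> lhm (P_T T)"
      using lhm_aux_atm hv Str body by (fastforce simp: inst_str_def)
    have "lift_gatm (atm_subst \<sigma> (rhead r0)) \<in> lhm (P_T T)"
      by (rule lhm_from_aux_atm[OF head _ aux]) (simp add: rule_vars_def)
    moreover have "r \<in> GR (dl_ground T)" using Str aux by (auto simp: dl_ground_def Let_def)
    ultimately show ?thesis using Str by (simp add: inst_str_def)
  next
    case Def
    have "(aux_atm (Inr r0) r0, map lift (rbody r0)) \<in> P_T T"
      and head: "(lift (rhead r0), [aux_atm (Inr r0) r0]) \<in> P_T T"
      and name: "(lift (nm T r0), [aux_atm (Inr r0) r0]) \<in> P_T T"
      using Def unfolding P_T_def by blast+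
    then have aux: "(AuxP (Inr r0), map \<sigma> (vlist r0)) \<in> lhm (P_T T)"
      using lhm_aux_atm hv Def body by (fastforce simp: inst_def_def)
    have "lift_gatm (atm_subst \<sigma> (rhead r0)) \<in> lhm (P_T T)"
      by (rule lhm_from_aux_atm[OF head _ aux]) (simp add: rule_vars_def)
    moreover have "lift_gatm (atm_subst \<sigma> (nm T r0)) \<in> lhm (P_T T)"
      by (rule lhm_from_aux_atm[OF name _ aux]) (use nv Def in \<open>auto simp: rule_vars_def\<close>)
    moreover have "r \<in> GR (dl_ground T)" using Def aux by (auto simp: dl_ground_def Let_def)
    ultimately show ?thesis using Def by (simp add: inst_def_def)
  qed
qed

lemma full_ground_arg_in_dl_ground:
  assumes wf: "wf_theory T" and "is_arg (full_ground T) A"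
  shows "is_arg (dl_ground T) A \<and> lift_gatm (conc A) \<in> lhm (P_T T)
     \<and> (\<forall>s\<in>wp (full_ground T) A. lift_gatm s \<in> lhm (P_T T))"
  using assms(2)
proof induction
  case (prem k)
  then have "k \<in> Kn T \<union> Kp T" by (simp add: full_ground_def)
  then show ?case
    by (auto simp: wp_APrem full_ground_def dl_ground_def Let_def
        intro: lhm_premise is_arg.prem)
next
  case (node r As)
  have "\<forall>b\<in>set (gbody r). lift_gatm b \<in> lhm (P_T T)"
    using node.IH \<open>map conc As = gbody r\<close>[symmetric] by auto
  with full_ground_rule_in_dl_ground[OF wf node.hyps(1)]
  have r: "r \<in> GR (dl_ground T)" "lift_gatm (ghead r) \<in> lhm (P_T T)"
    "is_def r \<longrightarrow> lift_gatm (gname r) \<in> lhm (P_T T)" by blast+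
  have "is_arg (dl_ground T) (ANode r As)"
    using r(1) node.IH \<open>map conc As = gbody r\<close> by (blast intro: is_arg.node)
  with r node.IH show ?case by (auto simp: wp_ANode)
qed

lemma full_ground_contrary_in_dl_ground:
  assumes "(s, S) \<in> GC (full_ground T)" and "lift_gatm s \<in> lhm (P_T T)"
  shows "(s, S) \<in> GC (dl_ground T)"
proof -
  from assms(1) obtain c \<sigma> where c: "(s, S) = inst_c \<sigma> c" "c \<in> Cn T"
      "ground_subst_on (HU T) (crule_vars c) \<sigma>"
    by (auto simp: full_ground_def)
  moreover have "(OP (fst (fst c)), map (trm_subst \<sigma>) (snd (fst c))) \<in> lhm (P_T T)"
    using assms(2) c(1) by (simp add: inst_c_def atm_subst_def)
  ultimately have "inst_c \<sigma> c \<in> GC (dl_ground T)"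
    unfolding dl_ground_def Let_def by simp (metis prod.collapse)
  with c(1) show ?thesis by simp
qed

theorem lemma1:
  fixes T :: "('p, 'c, 'v) argtheory"
  assumes "wf_theory T"
  shows "Args (full_ground T) = Args (dl_ground T) \<and> Att (full_ground T) = Att (dl_ground T)"
proof -
  have dl_to_full: "is_arg (dl_ground T) A \<Longrightarrow> is_arg (full_ground T) A" for A
    by (rule is_arg_mono) (use dl_ground_subtheory[of T] in auto)
  have args: "Args (full_ground T) = Args (dl_ground T)"
    unfolding Args_def using full_ground_arg_in_dl_ground[OF assms] dl_to_full by blast
  have "attacks (full_ground T) A A' \<longleftrightarrow> attacks (dl_ground T) A A'"
    if "is_arg (full_ground T) A'" for A A'
    using full_ground_arg_in_dl_ground[OF assms that] full_ground_contrary_in_dl_ground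
      dl_ground_subtheory(4)
    unfolding attacks_def wp_dl_ground by blast
  then have "Att (full_ground T) = Att (dl_ground T)"
    unfolding Att_def using args by (auto simp: Args_def)
  with args show ?thesis by blast
qed

end
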